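(* Let $(S,K,I)$ be a split graph such that $K=\bigcup_{v\in I}N_v$. Let $P=v_1\ldots v_n$, with $n\geq 2$, be an induced path in $\Phi(S)$ with $d_1=\max\{d_i: i\in[n]\}$. Then: (1) $\left|\bigcup_{i=1}^n N_i\right|-d_1$ divides $\sigma_{12}$; (2) if $\Phi(S)=P$, then $|K|-d_1$ divides $\sigma_{12}$.
   Context: A split graph $(S,K,I)$ is a graph $S$ together with a fixed partition $V(S)=K\dot\cup I$, where $K$ is a clique and $I$ is an independent set. For a vertex $v_i$ (or $v$) of $S$, $N_i$ (or $N_v$) denotes its open neighborhood in $S$ and $d_i=|N_i|$ its degree in $S$; for $u,v$ write $\eta_{uv}=|N_u\cap N_v|$. The factor graph $\Phi(S)$ is the loopless multigraph with vertex set $I$ in which, for distinct $u,v\in I$, there is one edge joining $u$ and $v$ for each 2-switch of $S$ acting on $u$ and $v$ (a 2-switch replaces edges $ab,cd$ with $ac,bd$ when $ab,cd\in E(S)$ and $ac,bd\notin E(S)$); equivalently, the multiplicity of the edge $uv$ is $\sigma_{uv}=(d_u-\eta_{uv})(d_v-\eta_{uv})$, and $u,v$ are adjacent iff $\sigma_{uv}>0$. $\sigma_{12}$ denotes $\sigma_{v_1v_2}$. An induced path in $\Phi(S)$ consists of distinct vertices with consecutive ones adjacent and no other pair adjacent (multiplicities ignored for adjacency). *)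

theory Defs
  imports Main
begin

definition split_graph :: "'a set \<Rightarrow> ('a \<Rightarrow> 'a \<Rightarrow> bool) \<Rightarrow> 'a set \<Rightarrow> 'a set \<Rightarrow> bool" where
  "split_graph V E K I \<longleftrightarrow>
     finite V \<and>
     (\<forall>u v. E u v \<longrightarrow> u \<in> V \<and> v \<in> V) \<and>
     (\<forall>u v. E u v \<longrightarrow> E v u) \<and>
     (\<forall>v. \<not> E v v) \<and>
     K \<union> I = V \<and> K \<inter> I = {} \<and>
     (\<forall>u\<in>K. \<forall>v\<in>K. u \<noteq> v \<longrightarrow> E u v) \<and>
     (\<forall>u\<in>I. \<forall>v\<in>I. \<not> E u v)"

definition nbhd :: "'a set \<Rightarrow> ('a \<Rightarrow> 'a \<Rightarrow> bool) \<Rightarrow> 'a \<Rightarrow> 'a set" where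
  "nbhd V E v = {u \<in> V. E v u}"

definition deg :: "'a set \<Rightarrow> ('a \<Rightarrow> 'a \<Rightarrow> bool) \<Rightarrow> 'a \<Rightarrow> nat" where
  "deg V E v = card (nbhd V E v)"

definition eta :: "'a set \<Rightarrow> ('a \<Rightarrow> 'a \<Rightarrow> bool) \<Rightarrow> 'a \<Rightarrow> 'a \<Rightarrow> nat" where
  "eta V E u v = card (nbhd V E u \<inter> nbhd V E v)"

text \<open>Multiplicity of the edge uv in the factor graph \<Phi>(S).\<close>
definition sigma :: "'a set \<Rightarrow> ('a \<Rightarrow> 'a \<Rightarrow> bool) \<Rightarrow> 'a \<Rightarrow> 'a \<Rightarrow> nat" where
  "sigma V E u v = (deg V E u - eta V E u v) * (deg V E v - eta V E u v)"

definition phi_adj :: "'a set \<Rightarrow> ('a \<Rightarrow> 'a \<Rightarrow> bool) \<Rightarrow> 'a set \<Rightarrow> 'a \<Rightarrow> 'a \<Rightarrow> bool" where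
  "phi_adj V E I u v \<longleftrightarrow> u \<in> I \<and> v \<in> I \<and> u \<noteq> v \<and> sigma V E u v > 0"

text \<open>Induced path v_1 ... v_n in \<Phi>(S), given as the list [v_1,...,v_n]
  (so v_i = vs ! (i-1)).\<close>
definition phi_induced_path :: "'a set \<Rightarrow> ('a \<Rightarrow> 'a \<Rightarrow> bool) \<Rightarrow> 'a set \<Rightarrow> 'a list \<Rightarrow> bool" where
  "phi_induced_path V E I vs \<longleftrightarrow>
     distinct vs \<and> set vs \<subseteq> I \<and>
     (\<forall>i j. i < length vs \<longrightarrow> j < length vs \<longrightarrow>
        (phi_adj V E I (vs ! i) (vs ! j) \<longleftrightarrow> (j = Suc i \<or> i = Suc j)))"

definition phi_is_path :: "'a set \<Rightarrow> ('a \<Rightarrow> 'a \<Rightarrow> bool) \<Rightarrow> 'a set \<Rightarrow> 'a list \<Rightarrow> bool" where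
  "phi_is_path V E I vs \<longleftrightarrow>
     I = set vs \<and>
     (\<forall>u\<in>I. \<forall>w\<in>I. phi_adj V E I u w \<longleftrightarrow>
        (\<exists>i. Suc i < length vs \<and> ((u = vs ! i \<and> w = vs ! Suc i) \<or> (w = vs ! i \<and> u = vs ! Suc i))))"

end

theory Submission
  imports Defs
begin

text \<open>Since \<open>\<sigma>\<^sub>u\<^sub>v = |N\<^sub>u - N\<^sub>v| |N\<^sub>v - N\<^sub>u|\<close>, two vertices of \<open>I\<close> are non-adjacent in \<open>\<Phi>(S)\<close>
  exactly when their neighbourhoods are nested. As \<open>v\<^sub>1\<close> has maximum degree and is
  non-adjacent to \<open>v\<^sub>3, \<dots>, v\<^sub>n\<close>, all their neighbourhoods lie in \<open>N\<^sub>1\<close>, so the union of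
  the neighbourhoods along the path is \<open>N\<^sub>1 \<union> N\<^sub>2\<close>. Hence
  \<open>|\<Union>N\<^sub>i| - d\<^sub>1 = |N\<^sub>2 - N\<^sub>1|\<close>, which is a factor of \<open>\<sigma>\<^sub>1\<^sub>2\<close>. If \<open>\<Phi>(S) = P\<close>, the covering
  hypothesis makes this union equal to \<open>K\<close>.\<close>

lemma finite_nbhd: "finite V \<Longrightarrow> finite (nbhd V E v)"
  unfolding nbhd_def by simp

lemma sigma_eq_card_Diff:
  assumes "finite V"
  shows "sigma V E u v = card (nbhd V E u - nbhd V E v) * card (nbhd V E v - nbhd V E u)"
  using finite_nbhd[OF assms]
  by (simp add: sigma_def deg_def eta_def card_Diff_subset_Int Int_commute)

lemma sigma_eq_0_iff_nbhd_nested: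
  assumes "finite V"
  shows "sigma V E u v = 0 \<longleftrightarrow> nbhd V E u \<subseteq> nbhd V E v \<or> nbhd V E v \<subseteq> nbhd V E u"
  using finite_nbhd[OF assms] by (simp add: sigma_eq_card_Diff[OF assms])

lemma nbhd_subset_if_sigma_eq_0:
  assumes "finite V" and "sigma V E u v = 0" and "deg V E v \<le> deg V E u"
  shows "nbhd V E v \<subseteq> nbhd V E u"
proof -
  have "nbhd V E u \<subseteq> nbhd V E v \<longrightarrow> nbhd V E u = nbhd V E v"
    using assms(3) finite_nbhd[OF assms(1)] card_seteq unfolding deg_def by blast
  then show ?thesis
    using assms(2) sigma_eq_0_iff_nbhd_nested[OF assms(1)] by blast
qed

lemma sigma_eq_0_if_phi_induced_path_nonconsecutive:
  assumes "phi_induced_path V E I vs" and "i < length vs" "j < length vs"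
    and "i \<noteq> j" "j \<noteq> Suc i" "i \<noteq> Suc j"
  shows "sigma V E (vs ! i) (vs ! j) = 0"
proof -
  have "vs ! i \<in> I" "vs ! j \<in> I" "vs ! i \<noteq> vs ! j"
    using assms nth_eq_iff_index_eq unfolding phi_induced_path_def by (blast intro: nth_mem)+
  moreover have "\<not> phi_adj V E I (vs ! i) (vs ! j)"
    using assms unfolding phi_induced_path_def by blast
  ultimately show ?thesis
    unfolding phi_adj_def by simp
qed

lemma Union_nbhd_phi_induced_path:
  assumes "finite V" and path: "phi_induced_path V E I vs" and len: "length vs \<ge> 2"
    and dmax: "\<forall>i < length vs. deg V E (vs ! i) \<le> deg V E (vs ! 0)"
  shows "(\<Union>i<length vs. nbhd V E (vs ! i)) = nbhd V E (vs ! 0) \<union> nbhd V E (vs ! 1)"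
proof -
  have tail: "nbhd V E (vs ! i) \<subseteq> nbhd V E (vs ! 0)" if "2 \<le> i" "i < length vs" for i
  proof (rule nbhd_subset_if_sigma_eq_0[OF \<open>finite V\<close>])
    show "sigma V E (vs ! 0) (vs ! i) = 0"
      using that by (intro sigma_eq_0_if_phi_induced_path_nonconsecutive[OF path]) auto
    show "deg V E (vs ! i) \<le> deg V E (vs ! 0)"
      using that dmax by simp
  qed
  have "nbhd V E (vs ! i) \<subseteq> nbhd V E (vs ! 0) \<union> nbhd V E (vs ! 1)" if "i < length vs" for i
  proof -
    consider "i = 0" | "i = 1" | "2 \<le> i"
      by linarith
    then show ?thesis
      using tail[OF _ that] by cases auto
  qed
  moreover have "0 < length vs" "1 < length vs"
    using len by auto
  ultimately show ?thesis
    by (auto intro: UN_upper)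
qed

lemma card_Un_minus_card:
  assumes "finite A" "finite B"
  shows "int (card (A \<union> B)) - int (card A) = int (card (B - A))"
  using assms card_Un_disjoint[of A "B - A"] by simp

lemma card_Union_nbhd_minus_deg_dvd_sigma:
  assumes "finite V" and path: "phi_induced_path V E I vs" and len: "length vs \<ge> 2"
    and dmax: "\<forall>i < length vs. deg V E (vs ! i) \<le> deg V E (vs ! 0)"
  shows "(int (card (\<Union>i<length vs. nbhd V E (vs ! i))) - int (deg V E (vs ! 0)))
            dvd int (sigma V E (vs ! 0) (vs ! 1))"
proof -
  let ?N = "\<lambda>i. nbhd V E (vs ! i)"
  have "int (card (\<Union>i<length vs. ?N i)) - int (deg V E (vs ! 0)) = int (card (?N 1 - ?N 0))"
    unfolding Union_nbhd_phi_induced_path[OF \<open>finite V\<close> path len dmax] deg_def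
    by (intro card_Un_minus_card finite_nbhd \<open>finite V\<close>)
  moreover have "sigma V E (vs ! 0) (vs ! 1) = card (?N 0 - ?N 1) * card (?N 1 - ?N 0)"
    by (rule sigma_eq_card_Diff[OF \<open>finite V\<close>])
  ultimately show ?thesis
    by simp
qed

lemma cover_eq_Union_nbhd_if_phi_is_path:
  assumes "K = (\<Union>v\<in>I. nbhd V E v)" and "phi_is_path V E I vs"
  shows "K = (\<Union>i<length vs. nbhd V E (vs ! i))"
proof -
  have "I = (\<lambda>i. vs ! i) ` {..<length vs}"
    using assms(2) unfolding phi_is_path_def by (auto simp: set_conv_nth)
  then show ?thesis
    using assms(1) by simp
qed

theorem corollary2p5:
  fixes V :: "'a set" and E :: "'a \<Rightarrow> 'a \<Rightarrow> bool" and K I :: "'a set" and vs :: "'a list"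
  assumes split: "split_graph V E K I"
    and cover: "K = (\<Union>v\<in>I. nbhd V E v)"
    and path: "phi_induced_path V E I vs"
    and len: "length vs \<ge> 2"
    and dmax: "\<forall>i < length vs. deg V E (vs ! i) \<le> deg V E (vs ! 0)"
  shows "(int (card (\<Union>i<length vs. nbhd V E (vs ! i))) - int (deg V E (vs ! 0)))
            dvd int (sigma V E (vs ! 0) (vs ! 1)) \<and>
         (phi_is_path V E I vs \<longrightarrow>
          (int (card K) - int (deg V E (vs ! 0))) dvd int (sigma V E (vs ! 0) (vs ! 1)))"
proof -
  have "finite V"
    using split unfolding split_graph_def by blast
  then show ?thesis
    using card_Union_nbhd_minus_deg_dvd_sigma[OF _ path len dmax]
      cover_eq_Union_nbhd_if_phi_is_path[OF cover] by auto
qed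

end
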